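(* For every smooth $G$ supported on $[0,1]\times[0,1]$, $$\Big\|\sum_{n,m\in\mathbb{Z}}\langle G,\varphi_{n,m}\otimes\overline{\varphi_{n,m}}\rangle(\chi_n\otimes\chi_m)\Big\|_{L^2(\mathbb{R}^2)}\lesssim\Big(\iint_{[0,1]^2}\frac{|G(s,t)|^2}{|s-t|}\,ds\,dt\Big)^{1/2}.$$
   Context: Fix $\varphi\in C_c^\infty(\mathbb{R})$ supported in a small open neighborhood of $[0,1]$ with $\varphi\equiv1$ on $[0,1]$; $\varphi_{n,m}(x)=\varphi(x)e^{2\pi inx}e^{2\pi imx^2}$; $\chi_n$ is the indicator of $[n,n+1)$; $(\varphi_{n,m}\otimes\overline{\varphi_{n,m}})(s,t)=\varphi_{n,m}(s)\overline{\varphi_{n,m}(t)}$; $\langle u,v\rangle=\iint u\bar v$. *)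

theory Defs
  imports "HOL-Analysis.Analysis"
begin

text \<open>C-infinity smoothness on a Euclidean space: f is differentiable everywhere and all
  its partial derivatives (along basis vectors) are again smooth (greatest fixed point).\<close>
coinductive smooth :: "('a::euclidean_space \<Rightarrow> 'b::real_normed_vector) \<Rightarrow> bool" where
  "(\<forall>x. f differentiable (at x)) \<Longrightarrow>
   (\<forall>i\<in>Basis. smooth (\<lambda>x. frechet_derivative f (at x) i)) \<Longrightarrow> smooth f"

definition phinm :: "(real \<Rightarrow> complex) \<Rightarrow> int \<Rightarrow> int \<Rightarrow> real \<Rightarrow> complex" where
  "phinm \<phi> n m x = \<phi> x * exp (2 * pi * \<i> * of_int n * of_real x)
                          * exp (2 * pi * \<i> * of_int m * of_real (x^2))"

definition coef :: "(real \<Rightarrow> complex) \<Rightarrow> (real \<times> real \<Rightarrow> complex) \<Rightarrow> int \<Rightarrow> int \<Rightarrow> complex" where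
  "coef \<phi> G n m = (\<integral>z. G z * cnj (phinm \<phi> n m (fst z) * cnj (phinm \<phi> n m (snd z))) \<partial>lborel)"

definition chi :: "int \<Rightarrow> real \<Rightarrow> complex" where
  "chi n x = indicator {real_of_int n..<real_of_int n + 1} x"

definition bigF :: "(real \<Rightarrow> complex) \<Rightarrow> (real \<times> real \<Rightarrow> complex) \<Rightarrow> real \<times> real \<Rightarrow> complex" where
  "bigF \<phi> G z = (\<Sum>\<^sub>\<infinity>(n,m)\<in>(UNIV :: (int \<times> int) set).
                      coef \<phi> G n m * chi n (fst z) * chi m (snd z))"

end

theory Submission
  imports Defs
begin

(* Write e(x) = exp(2 pi i x). Substituting s = t + u, the coefficient of chi_n (x) chi_m is the
   Fourier coefficient at frequency n of
     A_m(u) = int G(t + u, t) e(-m (u^2 + 2ut)) dt,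
   which is supported in [-1, 1]. The step function has squared L^2 norm sum_{n,m} |coef n m|^2, and
   Bessel's inequality on [-1, 1] bounds the sum over n by 2 int |A_m|^2. For fixed 0 < |u| <= 1 the
   phase is linear in t: up to a unimodular factor A_m(u) is the Fourier coefficient of
   t |-> G(t + u, t) at frequency 2um, and these frequencies are orthogonal on [0, 1/|u|], an
   interval containing [0, 1]. Bessel's inequality in m gives
     sum_m |A_m(u)|^2 <= |u|^-1 int |G(t + u, t)|^2 dt,
   and undoing the substitution yields the claim with C = 2. About phi only phi = 1 on [0, 1] is
   used, and about G only continuity. *)

lemma integrable_bounded_support:
  fixes f :: "'a::euclidean_space \<Rightarrow> 'b::{banach,second_countable_topology}"
  assumes "f \<in> borel_measurable lborel" and "\<And>x. norm (f x) \<le> C"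
    and "\<And>x. x \<notin> cbox a b \<Longrightarrow> f x = 0"
  shows "integrable lborel f"
proof (rule Bochner_Integration.integrable_bound)
  show "integrable lborel (\<lambda>x. indicator (cbox a b) x * C)"
    by (simp add: integrable_indicator_iff emeasure_lborel_cbox_eq)
  show "AE x in lborel. norm (f x) \<le> norm (indicator (cbox a b) x * C)"
    using assms(2,3) by (auto split: split_indicator intro!: order_trans[OF _ abs_ge_self])
qed fact

section \<open>Characters and trigonometric polynomials\<close>

definition e2pi :: "real \<Rightarrow> complex" where
  "e2pi x = exp (2 * pi * \<i> * complex_of_real x)"

lemma norm_e2pi [simp]: "norm (e2pi x) = 1"
  unfolding e2pi_def by simp

lemma e2pi_0 [simp]: "e2pi 0 = 1"
  unfolding e2pi_def by simp

lemma e2pi_add: "e2pi (x + y) = e2pi x * e2pi y"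
  unfolding e2pi_def by (simp add: distrib_left exp_add)

lemma cnj_e2pi: "cnj (e2pi x) = e2pi (- x)"
  unfolding e2pi_def by (simp add: exp_cnj)

lemma e2pi_of_int [simp]: "e2pi (of_int k) = 1"
  unfolding e2pi_def using exp_integer_2pi[of "of_int k"] by (simp add: mult_ac)

lemma continuous_on_e2pi [continuous_intros]:
  "continuous_on S f \<Longrightarrow> continuous_on S (\<lambda>x. e2pi (f x))"
  unfolding e2pi_def by (intro continuous_intros)

lemma borel_measurable_e2pi [measurable]: "e2pi \<in> borel_measurable borel"
  by (intro borel_measurable_continuous_onI continuous_on_e2pi continuous_on_id)

lemma has_vector_derivative_e2pi:
  "((\<lambda>x. e2pi (\<mu> * x)) has_vector_derivative (2 * pi * \<i> * \<mu>) * e2pi (\<mu> * x)) (at x within S)"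
proof -
  have "((\<lambda>z. exp (2 * pi * \<i> * \<mu> * z)) has_field_derivative
          (2 * pi * \<i> * \<mu>) * exp (2 * pi * \<i> * \<mu> * of_real x)) (at (of_real x))"
    by (auto intro!: derivative_eq_intros)
  from has_vector_derivative_real_field[OF this] show ?thesis
    unfolding e2pi_def by (simp add: mult.assoc)
qed

lemma integral_e2pi_interval:
  assumes L: "L > 0" and period: "\<mu> * L = of_int j"
  shows "(\<integral>x. indicator {a..a+L} x *\<^sub>R e2pi (\<mu> * x) \<partial>lborel) = (if \<mu> = 0 then of_real L else 0)"
proof (cases "\<mu> = 0")
  case True
  then show ?thesis using L by (simp add: scaleR_conv_of_real)
next
  case False
  define c where "c = inverse (2 * pi * \<i> * complex_of_real \<mu>)"
  have c: "c * (2 * pi * \<i> * complex_of_real \<mu>) = 1"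
    using False unfolding c_def by (simp add: field_simps)
  have "(LBINT x=a..a+L. e2pi (\<mu> * x)) = c * e2pi (\<mu> * (a + L)) - c * e2pi (\<mu> * a)"
  proof (rule interval_integral_FTC_finite)
    show "continuous_on {min a (a + L)..max a (a + L)} (\<lambda>x. e2pi (\<mu> * x))"
      by (intro continuous_intros)
    show "((\<lambda>x. c * e2pi (\<mu> * x)) has_vector_derivative e2pi (\<mu> * x))
            (at x within {min a (a + L)..max a (a + L)})" for x
      using has_vector_derivative_mult_right[OF has_vector_derivative_e2pi[of \<mu> x], of c] c
      by (simp add: mult.assoc[symmetric])
  qed
  also have "\<dots> = 0"
    using period by (simp add: distrib_left e2pi_add)
  finally show ?thesis
    using L False by (simp add: interval_integral_Icc set_lebesgue_integral_def)
qed

lemma norm_trig_poly_squared: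
  "complex_of_real ((cmod (\<Sum>n\<in>N. c n * e2pi (\<omega> * of_int n * x)))\<^sup>2)
     = (\<Sum>n\<in>N. \<Sum>k\<in>N. (c n * cnj (c k)) * e2pi (\<omega> * of_int (n - k) * x))"
proof -
  have shift: "e2pi (\<omega> * of_int n * x) * e2pi (- (\<omega> * of_int k * x)) = e2pi (\<omega> * of_int (n - k) * x)"
    for n k
    by (simp add: e2pi_add[symmetric] algebra_simps)
  show ?thesis
    unfolding complex_norm_square shift[symmetric] by (simp add: cnj_e2pi sum_product mult_ac)
qed

lemma nn_integral_norm_trig_poly:
  assumes L: "L > 0" and \<omega>: "\<omega> * L = of_int j" "j \<noteq> 0" and N: "finite N"
  shows "(\<integral>\<^sup>+x. ennreal (indicator {a..a+L} x * (cmod (\<Sum>n\<in>N. c n * e2pi (\<omega> * of_int n * x)))\<^sup>2) \<partial>lborel)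
           = ennreal (L * (\<Sum>n\<in>N. (cmod (c n))\<^sup>2))"
proof -
  define I where "I = {a..a+L}"
  define P where "P x = (\<Sum>n\<in>N. c n * e2pi (\<omega> * of_int n * x))" for x
  define E where "E k x = indicator I x *\<^sub>R e2pi (\<omega> * of_int k * x)" for k :: int and x
  have "\<omega> \<noteq> 0"
    using \<omega> by auto
  have E_measurable [measurable]: "E k \<in> borel_measurable borel" for k
    unfolding E_def I_def by measurable
  have E_integrable: "integrable lborel (E k)" for k
    by (rule integrable_bounded_support[where C=1 and a=a and b="a+L"])
       (auto simp: E_def I_def split: split_indicator)
  have E_integral: "(\<integral>x. E (n - k) x \<partial>lborel) = (if k = n then of_real L else 0)" for n k
    using \<omega> \<open>\<omega> \<noteq> 0\<close> integral_e2pi_interval[OF L, of "\<omega> * of_int (n - k)" "j * (n - k)" a]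
    by (simp add: E_def I_def mult_ac)
  have "complex_of_real (\<integral>x. indicator I x * (cmod (P x))\<^sup>2 \<partial>lborel)
      = (\<integral>x. (\<Sum>n\<in>N. \<Sum>k\<in>N. (c n * cnj (c k)) * E (n - k) x) \<partial>lborel)"
    unfolding integral_complex_of_real[symmetric] of_real_mult P_def norm_trig_poly_squared
    by (simp add: E_def scaleR_conv_of_real sum_distrib_left mult_ac)
  also have "\<dots> = (\<Sum>n\<in>N. \<Sum>k\<in>N. (c n * cnj (c k)) * (if k = n then of_real L else 0))"
    by (simp add: Bochner_Integration.integral_sum E_integrable E_integral)
  also have "\<dots> = (\<Sum>n\<in>N. of_real L * (c n * cnj (c n)))"
    using N by (simp add: if_distrib[of "\<lambda>z. _ * z"] mult_ac cong: if_cong)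
  also have "\<dots> = complex_of_real (L * (\<Sum>n\<in>N. (cmod (c n))\<^sup>2))"
    by (simp only: complex_norm_square of_real_sum of_real_mult sum_distrib_left)
  finally have "(\<integral>x. indicator I x * (cmod (P x))\<^sup>2 \<partial>lborel) = L * (\<Sum>n\<in>N. (cmod (c n))\<^sup>2)"
    unfolding of_real_eq_iff .
  moreover have "integrable lborel (\<lambda>x. indicator I x * (cmod (P x))\<^sup>2)"
    by (rule integrable_bounded_support[where C="(\<Sum>n\<in>N. cmod (c n))\<^sup>2" and a=a and b="a+L"])
       (auto simp: I_def P_def norm_mult intro!: power_mono order_trans[OF norm_sum] sum_mono
             split: split_indicator)
  ultimately show ?thesis
    by (simp add: nn_integral_eq_integral I_def P_def)
qed

section \<open>Bessel's inequality on an interval\<close>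

lemma nn_integral_count_space_int_le:
  fixes f :: "int \<Rightarrow> ennreal"
  assumes "\<And>N. finite N \<Longrightarrow> (\<Sum>n\<in>N. f n) \<le> B"
  shows "(\<integral>\<^sup>+n. f n \<partial>count_space UNIV) \<le> B"
proof -
  have "(\<integral>\<^sup>+n. f n \<partial>count_space UNIV) = (\<Sum>k. f (int_decode k))"
    using nn_integral_bij_count_space[OF bij_int_decode, of f] by (simp add: nn_integral_count_space_nat)
  also have "\<dots> \<le> B"
  proof (rule suminf_le_const[OF summableI])
    fix k
    show "(\<Sum>i<k. f (int_decode i)) \<le> B"
      using assms[of "int_decode ` {..<k}"] by (simp add: sum.reindex inj_int_decode)
  qed
  finally show ?thesis .
qed

definition fourier :: "(real \<Rightarrow> complex) \<Rightarrow> real \<Rightarrow> complex" where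
  "fourier g \<xi> = (\<integral>x. g x * e2pi (- (\<xi> * x)) \<partial>lborel)"

lemma sum_norm_fourier_le_pairing:
  fixes g :: "real \<Rightarrow> complex"
  assumes g: "integrable lborel g" and supp: "\<And>x. x \<notin> I \<Longrightarrow> g x = 0"
  shows "ennreal (\<Sum>n\<in>N. (cmod (fourier g (\<omega> * of_int n)))\<^sup>2)
           \<le> (\<integral>\<^sup>+x. ennreal (cmod (g x))
                 * ennreal (indicator I x * cmod (\<Sum>n\<in>N. fourier g (\<omega> * of_int n) * e2pi (\<omega> * of_int n * x))) \<partial>lborel)"
proof -
  define c where "c n = fourier g (\<omega> * of_int n)" for n
  define P where "P x = (\<Sum>n\<in>N. c n * e2pi (\<omega> * of_int n * x))" for x
  have [measurable]: "g \<in> borel_measurable lborel"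
    using g by (rule borel_measurable_integrable)
  have g_cnj_P: "g x * cnj (P x) = (\<Sum>n\<in>N. cnj (c n) * (g x * e2pi (- (\<omega> * of_int n * x))))" for x
    by (simp add: P_def cnj_e2pi sum_distrib_left mult_ac)
  have integrable_g_e2pi: "integrable lborel (\<lambda>x. g x * e2pi (- (\<omega> * of_int n * x)))" for n
    by (rule Bochner_Integration.integrable_bound[OF g]) (auto simp: norm_mult)
  have "complex_of_real (\<Sum>n\<in>N. (cmod (c n))\<^sup>2) = (\<Sum>n\<in>N. cnj (c n) * c n)"
    by (simp only: of_real_sum complex_norm_square mult.commute)
  also have "\<dots> = (\<integral>x. g x * cnj (P x) \<partial>lborel)"
    unfolding g_cnj_P by (simp add: Bochner_Integration.integral_sum integrable_g_e2pi c_def fourier_def)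
  finally have pairing: "complex_of_real (\<Sum>n\<in>N. (cmod (c n))\<^sup>2) = (\<integral>x. g x * cnj (P x) \<partial>lborel)" .
  have "ennreal (\<Sum>n\<in>N. (cmod (c n))\<^sup>2) = ennreal (cmod (\<integral>x. g x * cnj (P x) \<partial>lborel))"
    unfolding pairing[symmetric] norm_of_real by (simp add: sum_nonneg)
  also have "\<dots> \<le> (\<integral>\<^sup>+x. ennreal (cmod (g x * cnj (P x))) \<partial>lborel)"
    by (rule integral_norm_bound_ennreal) (simp add: g_cnj_P integrable_g_e2pi)
  also have "\<dots> = (\<integral>\<^sup>+x. ennreal (cmod (g x)) * ennreal (indicator I x * cmod (P x)) \<partial>lborel)"
    using supp by (intro nn_integral_cong) (auto simp: norm_mult ennreal_mult split: split_indicator)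
  finally show ?thesis
    unfolding c_def P_def .
qed

lemma bessel_inequality_finite:
  fixes g :: "real \<Rightarrow> complex"
  assumes g: "integrable lborel g" and supp: "\<And>x. x \<notin> {a..a+L} \<Longrightarrow> g x = 0"
    and L: "L > 0" and \<omega>: "\<omega> * L = of_int j" "j \<noteq> 0" and N: "finite N"
  shows "ennreal (\<Sum>n\<in>N. (cmod (fourier g (\<omega> * of_int n)))\<^sup>2)
           \<le> ennreal L * (\<integral>\<^sup>+x. ennreal ((cmod (g x))\<^sup>2) \<partial>lborel)"
proof -
  \<comment> \<open>With P = sum c_n e(omega n x): S = <g, P> <= ||g||_2 ||1_I P||_2 = ||g||_2 (L S)^(1/2).\<close>
  define I where "I = {a..a+L}"
  define c where "c n = fourier g (\<omega> * of_int n)" for n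
  define P where "P x = (\<Sum>n\<in>N. c n * e2pi (\<omega> * of_int n * x))" for x
  define S where "S = (\<Sum>n\<in>N. (cmod (c n))\<^sup>2)"
  define Q where "Q = (\<integral>\<^sup>+x. ennreal ((cmod (g x))\<^sup>2) \<partial>lborel)"
  have [measurable]: "g \<in> borel_measurable lborel"
    using g by (rule borel_measurable_integrable)
  have [measurable]: "P \<in> borel_measurable lborel"
    unfolding P_def by measurable
  have S_nonneg: "S \<ge> 0"
    unfolding S_def by (simp add: sum_nonneg)
  have S_le: "ennreal S \<le> (\<integral>\<^sup>+x. ennreal (cmod (g x)) * ennreal (indicator I x * cmod (P x)) \<partial>lborel)"
    unfolding I_def S_def c_def P_def by (rule sum_norm_fourier_le_pairing[OF g supp])
  have "(\<integral>\<^sup>+x. ennreal (cmod (g x)) * ennreal (indicator I x * cmod (P x)) \<partial>lborel)\<^sup>2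
      \<le> (\<integral>\<^sup>+x. ennreal (cmod (g x)) ^ 2 \<partial>lborel) * (\<integral>\<^sup>+x. ennreal (indicator I x * cmod (P x)) ^ 2 \<partial>lborel)"
    by (rule Cauchy_Schwarz_nn_integral) (simp_all add: I_def)
  also have "(\<integral>\<^sup>+x. ennreal (indicator I x * cmod (P x)) ^ 2 \<partial>lborel)
      = (\<integral>\<^sup>+x. ennreal (indicator I x * (cmod (P x))\<^sup>2) \<partial>lborel)"
    by (intro nn_integral_cong) (simp add: ennreal_power split: split_indicator)
  finally have "(ennreal S)\<^sup>2 \<le> Q * (\<integral>\<^sup>+x. ennreal (indicator I x * (cmod (P x))\<^sup>2) \<partial>lborel)"
    using power_mono[OF S_le, of 2] by (simp add: Q_def ennreal_power)
  also have "(\<integral>\<^sup>+x. ennreal (indicator I x * (cmod (P x))\<^sup>2) \<partial>lborel) = ennreal (L * S)"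
    unfolding I_def P_def S_def by (rule nn_integral_norm_trig_poly[OF L \<omega> N])
  finally have "ennreal S * ennreal S \<le> ennreal S * (ennreal L * Q)"
    by (simp add: power2_eq_square ennreal_mult[OF less_imp_le[OF L] S_nonneg] mult_ac)
  then have "ennreal S \<le> ennreal L * Q"
    by (cases "S = 0") (simp_all add: ennreal_mult_le_mult_iff S_nonneg)
  then show ?thesis
    unfolding S_def c_def Q_def .
qed

lemma bessel_inequality:
  fixes g :: "real \<Rightarrow> complex"
  assumes "integrable lborel g" and "\<And>x. x \<notin> {a..a+L} \<Longrightarrow> g x = 0"
    and "L > 0" and "\<omega> * L = of_int j" "j \<noteq> 0"
  shows "(\<integral>\<^sup>+n. ennreal ((cmod (fourier g (\<omega> * of_int n)))\<^sup>2) \<partial>count_space UNIV)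
           \<le> ennreal L * (\<integral>\<^sup>+x. ennreal ((cmod (g x))\<^sup>2) \<partial>lborel)"
  using bessel_inequality_finite[OF assms] by (intro nn_integral_count_space_int_le) simp

section \<open>Integrals of functions of the integer part\<close>

lemma vimage_floor_singleton: "(floor :: real \<Rightarrow> int) -` {n} = {real_of_int n..<real_of_int n + 1}"
  by (auto simp: floor_eq_iff)

lemma measurable_floor_count_space [measurable]:
  "(floor :: real \<Rightarrow> int) \<in> borel \<rightarrow>\<^sub>M count_space UNIV"
  by (simp add: measurable_count_space_eq2_countable vimage_floor_singleton)

lemma distr_lborel_floor:
  "distr lborel (count_space UNIV) (floor :: real \<Rightarrow> int) = count_space UNIV"
proof (rule measure_eqI_countable[where A=UNIV])
  fix n :: int
  show "emeasure (distr lborel (count_space UNIV) (floor :: real \<Rightarrow> int)) {n} = emeasure (count_space UNIV) {n}"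
    by (subst emeasure_distr) (simp_all add: measurable_floor_count_space vimage_floor_singleton)
qed simp_all

lemma nn_integral_floor:
  fixes f :: "int \<Rightarrow> ennreal"
  shows "(\<integral>\<^sup>+x. f \<lfloor>x :: real\<rfloor> \<partial>lborel) = (\<integral>\<^sup>+n. f n \<partial>count_space UNIV)"
  using nn_integral_distr[of "floor :: real \<Rightarrow> int" lborel "count_space UNIV" f]
  by (simp add: measurable_floor_count_space distr_lborel_floor)

lemma nn_integral_floor_pair:
  fixes f :: "int \<Rightarrow> int \<Rightarrow> ennreal"
  shows "(\<integral>\<^sup>+z. f \<lfloor>fst z :: real\<rfloor> \<lfloor>snd z :: real\<rfloor> \<partial>lborel)
           = (\<integral>\<^sup>+m. \<integral>\<^sup>+n. f n m \<partial>count_space UNIV \<partial>count_space UNIV)"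
proof -
  have "(\<lambda>z. f \<lfloor>fst z :: real\<rfloor> \<lfloor>snd z :: real\<rfloor>) \<in> borel_measurable (lborel \<Otimes>\<^sub>M lborel)"
    by measurable
  from lborel_pair.nn_integral_snd[OF this] have "(\<integral>\<^sup>+z. f \<lfloor>fst z :: real\<rfloor> \<lfloor>snd z :: real\<rfloor> \<partial>lborel)
      = (\<integral>\<^sup>+y. \<integral>\<^sup>+x. f \<lfloor>x :: real\<rfloor> \<lfloor>y :: real\<rfloor> \<partial>lborel \<partial>lborel)"
    by (simp add: lborel_prod)
  also have "\<dots> = (\<integral>\<^sup>+y. \<integral>\<^sup>+n. f n \<lfloor>y :: real\<rfloor> \<partial>count_space UNIV \<partial>lborel)"
    by (intro nn_integral_cong) (rule nn_integral_floor)
  also have "\<dots> = (\<integral>\<^sup>+m. \<integral>\<^sup>+n. f n m \<partial>count_space UNIV \<partial>count_space UNIV)"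
    by (rule nn_integral_floor)
  finally show ?thesis .
qed

lemma bigF_eq_coef_floor: "bigF \<phi> G z = coef \<phi> G \<lfloor>fst z\<rfloor> \<lfloor>snd z\<rfloor>"
proof -
  have chi: "chi n x = (if n = \<lfloor>x\<rfloor> then 1 else 0)" for n x
    unfolding chi_def by (auto split: split_indicator simp: floor_eq_iff intro: floor_unique[symmetric])
  have "bigF \<phi> G z = (\<Sum>\<^sub>\<infinity>(n, m)\<in>{(\<lfloor>fst z\<rfloor>, \<lfloor>snd z\<rfloor>)}. coef \<phi> G n m * chi n (fst z) * chi m (snd z))"
    unfolding bigF_def by (intro infsum_cong_neutral) (auto simp: chi split: if_splits)
  then show ?thesis
    by (simp add: chi)
qed

section \<open>Shear invariance of Lebesgue measure on the plane\<close>

lemma nn_integral_lborel_shear: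
  fixes F :: "real \<times> real \<Rightarrow> ennreal"
  assumes [measurable]: "F \<in> borel_measurable borel"
  shows "(\<integral>\<^sup>+u. \<integral>\<^sup>+t. F (t + u, t) \<partial>lborel \<partial>lborel) = (\<integral>\<^sup>+z. F z \<partial>lborel)"
proof -
  have "(\<lambda>(u, t). F (t + u, t)) \<in> borel_measurable (lborel \<Otimes>\<^sub>M lborel)"
    by measurable
  from lborel_pair.Fubini'[OF this]
  have "(\<integral>\<^sup>+u. \<integral>\<^sup>+t. F (t + u, t) \<partial>lborel \<partial>lborel) = (\<integral>\<^sup>+t. \<integral>\<^sup>+u. F (t + u, t) \<partial>lborel \<partial>lborel)"
    by simp
  also have "\<dots> = (\<integral>\<^sup>+t. \<integral>\<^sup>+s. F (s, t) \<partial>lborel \<partial>lborel)"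
  proof (rule nn_integral_cong)
    fix t
    show "(\<integral>\<^sup>+u. F (t + u, t) \<partial>lborel) = (\<integral>\<^sup>+s. F (s, t) \<partial>lborel)"
      using nn_integral_real_affine[where c=1 and t=t and f="\<lambda>s. F (s, t)"] by simp
  qed
  also have "\<dots> = (\<integral>\<^sup>+z. F z \<partial>lborel)"
    using lborel_pair.nn_integral_snd[of F] by (simp add: lborel_prod)
  finally show ?thesis .
qed

lemma integral_lborel_shear:
  fixes F :: "real \<times> real \<Rightarrow> 'b::{banach, second_countable_topology}"
  assumes F: "integrable lborel F"
  shows "(\<integral>u. \<integral>t. F (t + u, t) \<partial>lborel \<partial>lborel) = (\<integral>z. F z \<partial>lborel)"
proof -
  have [measurable]: "F \<in> borel_measurable borel"
    using F by (simp add: integrable_iff_bounded)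
  have "(\<integral>\<^sup>+p. ennreal (norm (F (snd p + fst p, snd p))) \<partial>(lborel \<Otimes>\<^sub>M lborel))
      = (\<integral>\<^sup>+u. \<integral>\<^sup>+t. norm (F (t + u, t)) \<partial>lborel \<partial>lborel)"
    using lborel.nn_integral_fst[of "\<lambda>p. ennreal (norm (F (snd p + fst p, snd p)))" lborel] by simp
  also have "\<dots> = (\<integral>\<^sup>+z. norm (F z) \<partial>lborel)"
    by (rule nn_integral_lborel_shear) measurable
  finally have "integrable (lborel \<Otimes>\<^sub>M lborel) (\<lambda>(u, t). F (t + u, t))"
    using F by (simp add: integrable_iff_bounded case_prod_beta')
  then have "(\<integral>u. \<integral>t. F (t + u, t) \<partial>lborel \<partial>lborel) = (\<integral>t. \<integral>u. F (t + u, t) \<partial>lborel \<partial>lborel)"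
    by (rule lborel_pair.Fubini_integral[symmetric])
  also have "\<dots> = (\<integral>t. \<integral>s. F (s, t) \<partial>lborel \<partial>lborel)"
    using lborel_integral_real_affine[where c=1, of "\<lambda>s. F (s, t)" t for t] by simp
  also have "\<dots> = (\<integral>z. F z \<partial>lborel)"
    using lborel_pair.integral_snd[of "\<lambda>s t. F (s, t)"] F by (simp add: lborel_prod)
  finally show ?thesis .
qed

section \<open>Kernels supported in the unit square\<close>

definition diag_fourier :: "(real \<times> real \<Rightarrow> complex) \<Rightarrow> int \<Rightarrow> real \<Rightarrow> complex" where
  "diag_fourier G m u = (\<integral>t. G (t + u, t) * e2pi (- (of_int m * (u\<^sup>2 + 2 * u * t))) \<partial>lborel)"

locale square_kernel =
  fixes G :: "real \<times> real \<Rightarrow> complex" and B :: real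
  assumes measurable_G [measurable]: "G \<in> borel_measurable borel"
    and support_G: "\<And>s t. G (s, t) \<noteq> 0 \<Longrightarrow> s \<in> {0..1} \<and> t \<in> {0..1}"
    and norm_G_le: "\<And>z. cmod (G z) \<le> B"
begin

lemma measurable_G_pair [measurable]: "G \<in> borel_measurable (borel \<Otimes>\<^sub>M borel)"
  by (simp add: borel_prod)

lemma G_eq_0: "\<not> (s \<in> {0..1} \<and> t \<in> {0..1}) \<Longrightarrow> G (s, t) = 0"
  using support_G by blast

lemma diag_fourier_measurable [measurable]: "diag_fourier G m \<in> borel_measurable borel"
  unfolding diag_fourier_def by measurable

lemma diag_fourier_eq_0: "u \<notin> {-1..1} \<Longrightarrow> diag_fourier G m u = 0"
  unfolding diag_fourier_def by (subst G_eq_0) auto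

lemma integrable_G_shift: "integrable lborel (\<lambda>t. G (t + u, t))"
  by (rule integrable_bounded_support[where C=B and a=0 and b=1]) (auto simp: norm_G_le G_eq_0)

lemma norm_diag_fourier_le: "cmod (diag_fourier G m u) \<le> B"
proof -
  have "cmod (diag_fourier G m u) \<le> (\<integral>t. cmod (G (t + u, t)) \<partial>lborel)"
    unfolding diag_fourier_def
    by (rule order_trans[OF integral_norm_bound]) (simp add: norm_mult)
  also have "\<dots> \<le> (\<integral>t. indicator {0..1::real} t * B \<partial>lborel)"
  proof (rule Bochner_Integration.integral_mono)
    show "integrable lborel (\<lambda>t. cmod (G (t + u, t)))"
      by (rule integrable_norm[OF integrable_G_shift])
    show "integrable lborel (\<lambda>t::real. indicator {0..1} t * B)"
      by (simp add: integrable_indicator_iff)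
  qed (auto simp: norm_G_le G_eq_0 split: split_indicator)
  finally show ?thesis
    by simp
qed

lemma integrable_diag_fourier: "integrable lborel (diag_fourier G m)"
  by (rule integrable_bounded_support[where C=B and a="-1" and b=1])
     (auto simp: norm_diag_fourier_le diag_fourier_eq_0)

lemma diag_fourier_eq_fourier:
  "diag_fourier G m u = e2pi (- (of_int m * u\<^sup>2)) * fourier (\<lambda>t. G (t + u, t)) (2 * u * of_int m)"
proof -
  have integrand: "G (t + u, t) * e2pi (- (of_int m * (u\<^sup>2 + 2 * u * t)))
      = e2pi (- (of_int m * u\<^sup>2)) * (G (t + u, t) * e2pi (- (2 * u * of_int m * t)))" for t
    by (simp add: e2pi_add[symmetric] algebra_simps)
  show ?thesis
    unfolding diag_fourier_def fourier_def integrand by simp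
qed

lemma coef_eq_fourier_diag_fourier:
  assumes \<phi>: "\<forall>x\<in>{0..1}. \<phi> x = 1"
  shows "coef \<phi> G n m = fourier (diag_fourier G m) (of_int n)"
proof -
  define K where "K z = G z * e2pi (- (of_int n * (fst z - snd z) + of_int m * ((fst z)\<^sup>2 - (snd z)\<^sup>2)))"
    for z
  have K_measurable: "K \<in> borel_measurable (borel \<Otimes>\<^sub>M borel)"
    unfolding K_def by measurable
  have phinm: "phinm \<phi> n m x = e2pi (of_int n * x + of_int m * x\<^sup>2)" if "x \<in> {0..1}" for x
    using \<phi> that unfolding phinm_def e2pi_def by (simp add: exp_add[symmetric] algebra_simps)
  have "coef \<phi> G n m = (\<integral>z. K z \<partial>lborel)"
    unfolding coef_def
  proof (intro Bochner_Integration.integral_cong refl)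
    fix z :: "real \<times> real"
    show "G z * cnj (phinm \<phi> n m (fst z) * cnj (phinm \<phi> n m (snd z))) = K z"
      using support_G[of "fst z" "snd z"]
      by (cases "G z = 0") (auto simp: K_def phinm cnj_e2pi e2pi_add[symmetric] algebra_simps)
  qed
  also have "\<dots> = (\<integral>u. \<integral>t. K (t + u, t) \<partial>lborel \<partial>lborel)"
  proof (rule integral_lborel_shear[symmetric])
    show "integrable lborel K"
      by (rule integrable_bounded_support[where C=B and a="(0, 0)" and b="(1, 1)"])
         (use K_measurable in \<open>auto simp: K_def norm_mult norm_G_le borel_prod cbox_Pair_eq
            split_beta dest!: support_G\<close>)
  qed
  also have "\<dots> = fourier (diag_fourier G m) (of_int n)"
  proof -
    have "K (t + u, t) = e2pi (- (of_int n * u)) * (G (t + u, t) * e2pi (- (of_int m * (u\<^sup>2 + 2 * u * t))))"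
      for t u
      unfolding K_def by (simp add: e2pi_add[symmetric] power2_eq_square algebra_simps)
    then show ?thesis
      by (simp add: diag_fourier_def fourier_def mult.commute)
  qed
  finally show ?thesis .
qed

lemma nn_integral_coef_le:
  assumes \<phi>: "\<forall>x\<in>{0..1}. \<phi> x = 1"
  shows "(\<integral>\<^sup>+n. ennreal ((cmod (coef \<phi> G n m))\<^sup>2) \<partial>count_space UNIV)
           \<le> 2 * (\<integral>\<^sup>+u. ennreal ((cmod (diag_fourier G m u))\<^sup>2) \<partial>lborel)"
  using bessel_inequality[OF integrable_diag_fourier, where a="-1" and L=2 and \<omega>=1 and j=2]
  by (simp add: coef_eq_fourier_diag_fourier[OF \<phi>] diag_fourier_eq_0)

lemma nn_integral_diag_fourier_le:
  assumes u: "u \<noteq> 0"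
  shows "(\<integral>\<^sup>+m. ennreal ((cmod (diag_fourier G m u))\<^sup>2) \<partial>count_space UNIV)
           \<le> ennreal (1 / \<bar>u\<bar>) * (\<integral>\<^sup>+t. ennreal ((cmod (G (t + u, t)))\<^sup>2) \<partial>lborel)"
proof (cases "\<bar>u\<bar> \<le> 1")
  case False
  then have "u \<notin> {-1..1}"
    by auto
  then show ?thesis
    by (simp add: diag_fourier_eq_0)
next
  case True
  have "(\<integral>\<^sup>+m. ennreal ((cmod (fourier (\<lambda>t. G (t + u, t)) (2 * u * of_int m)))\<^sup>2) \<partial>count_space UNIV)
      \<le> ennreal (1 / \<bar>u\<bar>) * (\<integral>\<^sup>+t. ennreal ((cmod (G (t + u, t)))\<^sup>2) \<partial>lborel)"
  proof (rule bessel_inequality[OF integrable_G_shift])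
    show "2 * u * (1 / \<bar>u\<bar>) = of_int (if u > 0 then 2 else - 2)"
      using u by simp
    have "1 \<le> 1 / \<bar>u\<bar>"
      using True u by simp
    then show "G (t + u, t) = 0" if "t \<notin> {0..0 + 1 / \<bar>u\<bar>}" for t
      using that by (intro G_eq_0) auto
  qed (use u in auto)
  then show ?thesis
    by (simp add: diag_fourier_eq_fourier norm_mult)
qed

lemma nn_integral_diagonals:
  "(\<integral>\<^sup>+u. ennreal (1 / \<bar>u\<bar>) * (\<integral>\<^sup>+t. ennreal ((cmod (G (t + u, t)))\<^sup>2) \<partial>lborel) \<partial>lborel)
     = (\<integral>\<^sup>+z\<in>{0..1} \<times> {0..1}. ennreal ((cmod (G z))\<^sup>2 / \<bar>fst z - snd z\<bar>) \<partial>lborel)"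
proof -
  have scale: "ennreal (1 / \<bar>u\<bar>) * (\<integral>\<^sup>+t. ennreal ((cmod (G (t + u, t)))\<^sup>2) \<partial>lborel)
      = (\<integral>\<^sup>+t. ennreal ((cmod (G (t + u, t)))\<^sup>2 / \<bar>u\<bar>) \<partial>lborel)" for u
  proof -
    have "ennreal (1 / \<bar>u\<bar>) * (\<integral>\<^sup>+t. ennreal ((cmod (G (t + u, t)))\<^sup>2) \<partial>lborel)
        = (\<integral>\<^sup>+t. ennreal (1 / \<bar>u\<bar>) * ennreal ((cmod (G (t + u, t)))\<^sup>2) \<partial>lborel)"
      by (rule nn_integral_cmult[symmetric]) measurable
    also have "\<dots> = (\<integral>\<^sup>+t. ennreal ((cmod (G (t + u, t)))\<^sup>2 / \<bar>u\<bar>) \<partial>lborel)"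
      by (intro nn_integral_cong) (subst ennreal_mult[symmetric]; simp)
    finally show ?thesis .
  qed
  have "(\<lambda>z. ennreal ((cmod (G z))\<^sup>2 / \<bar>fst z - snd z\<bar>)) \<in> borel_measurable borel"
    unfolding borel_prod[symmetric] by measurable
  from nn_integral_lborel_shear[OF this]
  have "(\<integral>\<^sup>+u. ennreal (1 / \<bar>u\<bar>) * (\<integral>\<^sup>+t. ennreal ((cmod (G (t + u, t)))\<^sup>2) \<partial>lborel) \<partial>lborel)
      = (\<integral>\<^sup>+z. ennreal ((cmod (G z))\<^sup>2 / \<bar>fst z - snd z\<bar>) \<partial>lborel)"
    by (simp add: scale)
  also have "\<dots> = (\<integral>\<^sup>+z\<in>{0..1} \<times> {0..1}. ennreal ((cmod (G z))\<^sup>2 / \<bar>fst z - snd z\<bar>) \<partial>lborel)"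
    by (intro nn_integral_cong) (auto split: split_indicator dest!: support_G)
  finally show ?thesis .
qed

lemma nn_integral_bigF_le:
  assumes \<phi>: "\<forall>x\<in>{0..1}. \<phi> x = 1"
  shows "(\<integral>\<^sup>+z. ennreal ((cmod (bigF \<phi> G z))\<^sup>2) \<partial>lborel)
           \<le> 2 * (\<integral>\<^sup>+z\<in>{0..1} \<times> {0..1}. ennreal ((cmod (G z))\<^sup>2 / \<bar>fst z - snd z\<bar>) \<partial>lborel)"
proof -
  have "(\<integral>\<^sup>+z. ennreal ((cmod (bigF \<phi> G z))\<^sup>2) \<partial>lborel)
      = (\<integral>\<^sup>+m. \<integral>\<^sup>+n. ennreal ((cmod (coef \<phi> G n m))\<^sup>2) \<partial>count_space UNIV \<partial>count_space UNIV)"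
    using nn_integral_floor_pair[of "\<lambda>n m. ennreal ((cmod (coef \<phi> G n m))\<^sup>2)"]
    by (simp add: bigF_eq_coef_floor)
  also have "\<dots> \<le> (\<integral>\<^sup>+m. 2 * (\<integral>\<^sup>+u. ennreal ((cmod (diag_fourier G m u))\<^sup>2) \<partial>lborel) \<partial>count_space UNIV)"
    by (intro nn_integral_mono nn_integral_coef_le \<phi>)
  also have "\<dots> = 2 * (\<integral>\<^sup>+m. \<integral>\<^sup>+u. ennreal ((cmod (diag_fourier G m u))\<^sup>2) \<partial>lborel \<partial>count_space UNIV)"
    by (rule nn_integral_cmult) simp
  also have "\<dots> = 2 * (\<integral>\<^sup>+u. \<integral>\<^sup>+m. ennreal ((cmod (diag_fourier G m u))\<^sup>2) \<partial>count_space UNIV \<partial>lborel)"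
    by (subst nn_integral_count_space_nn_integral) simp_all
  also have "\<dots> \<le> 2 * (\<integral>\<^sup>+u. ennreal (1 / \<bar>u\<bar>) * (\<integral>\<^sup>+t. ennreal ((cmod (G (t + u, t)))\<^sup>2) \<partial>lborel) \<partial>lborel)"
    using AE_lborel_singleton[of 0]
    by (intro mult_left_mono nn_integral_mono_AE) (auto elim!: eventually_mono intro: nn_integral_diag_fourier_le)
  also have "\<dots> = 2 * (\<integral>\<^sup>+z\<in>{0..1} \<times> {0..1}. ennreal ((cmod (G z))\<^sup>2 / \<bar>fst z - snd z\<bar>) \<partial>lborel)"
    by (simp only: nn_integral_diagonals)
  finally show ?thesis .
qed

end

lemma smooth_imp_continuous: "smooth f \<Longrightarrow> continuous_on UNIV f"
  by (erule smooth.cases) (auto intro!: continuous_at_imp_continuous_on differentiable_imp_continuous_within)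

lemma continuous_compact_support_imp_bounded:
  fixes f :: "'a::topological_space \<Rightarrow> 'b::real_normed_vector"
  assumes "continuous_on UNIV f" and "compact K" and "\<And>x. f x \<noteq> 0 \<Longrightarrow> x \<in> K"
  obtains B where "\<And>x. norm (f x) \<le> B"
proof -
  have "bounded (f ` K)"
    using assms(1,2) by (intro compact_imp_bounded compact_continuous_image) (auto intro: continuous_on_subset)
  then obtain B where "B > 0" and "\<And>x. x \<in> K \<Longrightarrow> norm (f x) \<le> B"
    by (auto simp: bounded_pos)
  with assms(3) show thesis
    by (metis less_imp_le norm_zero that)
qed

theorem lemma6p2:
  fixes \<phi> :: "real \<Rightarrow> complex"
  assumes "smooth \<phi>"
    and "bounded {x. \<phi> x \<noteq> 0}"
    and "\<forall>x\<in>{0..1}. \<phi> x = 1"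
  shows "\<exists>C. \<forall>G :: real \<times> real \<Rightarrow> complex.
           smooth G \<longrightarrow> (\<forall>s t. G (s, t) \<noteq> 0 \<longrightarrow> s \<in> {0..1} \<and> t \<in> {0..1}) \<longrightarrow>
           (\<integral>\<^sup>+ z. ennreal ((cmod (bigF \<phi> G z))^2) \<partial>lborel)
             \<le> ennreal C * (\<integral>\<^sup>+ z\<in>{0..1} \<times> {0..1}.
                               ennreal ((cmod (G z))^2 / \<bar>fst z - snd z\<bar>) \<partial>lborel)"
proof (intro exI[of _ 2] allI impI)
  fix G :: "real \<times> real \<Rightarrow> complex"
  assume "smooth G" and support: "\<forall>s t. G (s, t) \<noteq> 0 \<longrightarrow> s \<in> {0..1} \<and> t \<in> {0..1}"
  then have continuous: "continuous_on UNIV G"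
    by (simp add: smooth_imp_continuous)
  have "compact ({0..1} \<times> {0..1} :: (real \<times> real) set)"
    by (intro compact_Times compact_Icc)
  moreover have "z \<in> {0..1} \<times> {0..1}" if "G z \<noteq> 0" for z
    using support that by (cases z) auto
  ultimately obtain B where bound: "\<And>z. cmod (G z) \<le> B"
    using continuous_compact_support_imp_bounded[OF continuous] by blast
  interpret square_kernel G B
  proof
    show "G \<in> borel_measurable borel"
      using continuous by (rule borel_measurable_continuous_onI)
  qed (use support bound in auto)
  show "(\<integral>\<^sup>+ z. ennreal ((cmod (bigF \<phi> G z))^2) \<partial>lborel)
          \<le> ennreal 2 * (\<integral>\<^sup>+ z\<in>{0..1} \<times> {0..1}. ennreal ((cmod (G z))^2 / \<bar>fst z - snd z\<bar>) \<partial>lborel)"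
    using nn_integral_bigF_le[OF assms(3)] by simp
qed

end
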